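(* Let $q$ be a prime power, $n\ge1$, and let $C=\langle B_r\rangle\oplus\langle B_t\rangle\subseteq\mathbb{F}_q^n$ be an $\mathbb{F}_q$-linear code, where $B_r$ ($r\times n$) and $B_t$ ($t\times n$) are matrices over $\mathbb{F}_q$ with linearly independent rows, such that $\langle B_t\rangle\subseteq C^{\perp_e}$ and $t=\dim\langle B_t\rangle\ge 2$. Let $A$ be an invertible $t\times t$ matrix over $\mathbb{F}_q$ with no eigenvalue in $\mathbb{F}_q$. Let $c=\mathrm{rank}(HH^T)=\dim C-\dim(C\cap C^{\perp_e})$, where $H$ is any generator matrix of $C$ (the number of maximally entangled states of the EAQECC determined by $C$). Then $D_A$ gives rise to an EAQECC with parameters $[[n,\,n-2r-t+c,\,d';\,c]]_q$, i.e. $c(D_A)=c$, $k(D_A)=n-2r-t+c$, and $d'=d(D_A)\ge\min\left\{\delta_1,\left\lceil\left(1+\frac1q\right)\delta_2\right\rceil\right\}$, where $\delta_1=d_H(C^{\perp_e})$ and $\delta_2=d_H(\langle B_r\rangle^{\perp_e})$.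
   Context: $\mathbb{F}_q$ is the finite field with $q$ elements. $x\cdot_e y=\sum_i x_iy_i$ on $\mathbb{F}_q^n$; $V^{\perp_e}$ is the Euclidean dual; $\langle B\rangle$ is the row space of a matrix $B$; $d_H(V)$ is the minimum Hamming weight of a nonzero vector of $V$. On $\mathbb{F}_q^{2n}$, $(x|y)\cdot_s(z|w)=x\cdot_e w-z\cdot_e y$ and $D^{\perp_s}$ is the symplectic dual. The symplectic weight of $(x|y)$ is $\#\{j:(x_j,y_j)\neq(0,0)\}$; $d_s(S)$ is the minimum symplectic weight of a nonzero element of $S$. For a linear code $D\subseteq\mathbb{F}_q^{2n}$: $c(D)=\frac12(\dim D-\dim(D\cap D^{\perp_s}))$, $k(D)=n-\dim D+c(D)$, $d(D)=d_s(D^{\perp_s}\setminus(D\cap D^{\perp_s}))$; $D$ gives rise to an EAQECC with parameters $[[n,k(D),d(D);c(D)]]_q$. $D_A\subseteq\mathbb{F}_q^{2n}$ is the code generated by the rows of $\begin{pmatrix}B_t & AB_t\\ B_r & 0\\ 0 & B_r\end{pmatrix}$. *)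

theory Defs
  imports "Jordan_Normal_Form.Jordan_Normal_Form" "Jordan_Normal_Form.DL_Rank" "HOL-Library.Extended_Nat"
begin

(* Vectors of F_q^m are JNF vectors in carrier_vec m; the field F_q is a type
   'a :: {finite, field} with q = CARD('a). *)

definition sdim :: "nat \<Rightarrow> 'a::field vec set \<Rightarrow> nat" where
  "sdim m W = vectorspace.dim class_ring ((module_vec TYPE('a) m)\<lparr>carrier := W\<rparr>)"

definition rowsp :: "nat \<Rightarrow> 'a::field mat \<Rightarrow> 'a vec set" where
  "rowsp m B = (vec_space.row_space m B :: 'a vec set)"

definition rows_lin_indep :: "nat \<Rightarrow> 'a::field mat \<Rightarrow> bool" where
  "rows_lin_indep m B \<longleftrightarrow> distinct (rows B) \<and>
     module.lin_indpt class_ring (module_vec TYPE('a) m) (set (rows B))"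

definition edual :: "nat \<Rightarrow> 'a::field vec set \<Rightarrow> 'a vec set" where
  "edual m V = {x \<in> carrier_vec m. \<forall>y\<in>V. x \<bullet> y = 0}"

definition hwt :: "'a::zero vec \<Rightarrow> nat" where
  "hwt x = card {j. j < dim_vec x \<and> x $ j \<noteq> 0}"

definition dH :: "nat \<Rightarrow> 'a::zero vec set \<Rightarrow> nat" where
  "dH m V = Inf (hwt ` (V - {0\<^sub>v m}))"

definition sprod :: "nat \<Rightarrow> 'a::comm_ring vec \<Rightarrow> 'a vec \<Rightarrow> 'a" where
  "sprod n u v = vec_first u n \<bullet> vec_last v n - vec_first v n \<bullet> vec_last u n"

definition sdual :: "nat \<Rightarrow> 'a::comm_ring vec set \<Rightarrow> 'a vec set" where
  "sdual n D = {u \<in> carrier_vec (2*n). \<forall>v\<in>D. sprod n u v = 0}"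

definition swt :: "nat \<Rightarrow> 'a::zero vec \<Rightarrow> nat" where
  "swt n u = card {j. j < n \<and> (u $ j \<noteq> 0 \<or> u $ (n + j) \<noteq> 0)}"

definition c_EA :: "nat \<Rightarrow> 'a::field vec set \<Rightarrow> nat" where
  "c_EA n D = (sdim (2*n) D - sdim (2*n) (D \<inter> sdual n D)) div 2"

definition k_EA :: "nat \<Rightarrow> 'a::field vec set \<Rightarrow> int" where
  "k_EA n D = int n - int (sdim (2*n) D) + int (c_EA n D)"

(* minimum over the empty set is taken to be infinity *)
definition d_EA :: "nat \<Rightarrow> 'a::field vec set \<Rightarrow> enat" where
  "d_EA n D = Inf ((\<lambda>u. enat (swt n u)) ` (sdual n D - (D \<inter> sdual n D)))"

definition DA_gen :: "'a::field mat \<Rightarrow> 'a mat \<Rightarrow> 'a mat \<Rightarrow> 'a mat" where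
  "DA_gen A Br Bt = four_block_mat Bt (A * Bt)
      (Br @\<^sub>r 0\<^sub>m (dim_row Br) (dim_col Br)) (0\<^sub>m (dim_row Br) (dim_col Br) @\<^sub>r Br)"

definition D_A :: "nat \<Rightarrow> 'a::field mat \<Rightarrow> 'a mat \<Rightarrow> 'a mat \<Rightarrow> 'a vec set" where
  "D_A n A Br Bt = rowsp (2*n) (DA_gen A Br Bt)"

end

(*
  Every word of C is Br^T b + Bt^T a, and every word of D_A is
  (Br^T b + Bt^T a | Br^T c + Bt^T (A^T a)); both parametrisations are injective because the rows
  of Br and Bt are independent and span a direct sum. Since <Bt> is orthogonal to C, such a word of
  D_A is symplectically orthogonal to D_A iff b and c lie in the kernel K of the Gram matrix
  Br Br^T, and a word of C lies in its Euclidean dual iff b lies in K. Counting points over F_q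
  gives dim D_A = t + 2r, dim (D_A cap D_A^s) = t + 2 dim K, dim C = r + t and
  dim (C cap C^e) = t + dim K, so both sides of the formula for c equal r - dim K.

  A vector (x|y) lies in the symplectic dual of D_A iff Br x = Br y = 0 and A Bt x = Bt y.
  If Bt x = 0, then x and y lie in the Euclidean dual of C and one of them is nonzero. Otherwise
  no y + c x vanishes, for then Bt x would be an eigenvector of A; so x and the q vectors
  y + c x are nonzero words of <Br>^e, and since each coordinate of the joint support of x and y is
  nonzero in exactly q of these q + 1 words, averaging their weights gives
  (q + 1) delta_2 <= q swt (x|y).
*)
theory Submission
  imports Defs "HOL-Library.Cardinality" Jordan_Normal_Form.Matrix_Kernel
begin

lemma bij_betw_carrier_vec_PiE:
  "bij_betw (\<lambda>v. \<lambda>i\<in>{..<d}. v $ i) (carrier_vec d) ({..<d} \<rightarrow>\<^sub>E (UNIV :: 'a set))"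
proof (rule bij_betwI[where g = "vec d"])
  show "\<And>v. v \<in> carrier_vec d \<Longrightarrow> vec d (\<lambda>i\<in>{..<d}. v $ i) = (v :: 'a vec)"
    by (auto intro!: eq_vecI)
  show "\<And>f. f \<in> {..<d} \<rightarrow>\<^sub>E (UNIV :: 'a set) \<Longrightarrow> (\<lambda>i\<in>{..<d}. vec d f $ i) = f"
    by (auto simp: PiE_def extensional_def fun_eq_iff)
qed auto

lemma card_carrier_vec: "card (carrier_vec d :: 'a::finite vec set) = CARD('a) ^ d"
  using bij_betw_same_card[OF bij_betw_carrier_vec_PiE] by (simp add: card_funcsetE)

lemma finite_carrier_vec: "finite (carrier_vec d :: 'a::finite vec set)"
  by (simp add: bij_betw_finite[OF bij_betw_carrier_vec_PiE] finite_PiE)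

lemma card_field_gt_1: "1 < CARD('a::{finite,field})"
proof -
  have "card {0::'a, 1} \<le> CARD('a)" by (rule card_mono) auto
  then show ?thesis by simp
qed

lemma nat_ceiling_le_if_mult_le:
  fixes q d s :: nat
  assumes q: "0 < q" and le: "(q + 1) * d \<le> q * s"
  shows "nat \<lceil>(1 + 1 / real q) * real d\<rceil> \<le> s"
proof -
  have "(1 + 1 / real q) * real d = real ((q + 1) * d) / real q" using q by (simp add: field_simps)
  also have "\<dots> \<le> real (q * s) / real q"
    by (rule divide_right_mono) (use le in \<open>simp only: of_nat_le_iff\<close>, simp)
  also have "\<dots> = real s" using q by simp
  finally show ?thesis by (simp add: nat_le_iff ceiling_le_iff)
qed

lemma append_vec_eq_0_iff:
  assumes "v \<in> carrier_vec k1" and "w \<in> carrier_vec k2"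
  shows "v @\<^sub>v w = 0\<^sub>v (k1 + k2) \<longleftrightarrow> v = 0\<^sub>v k1 \<and> w = 0\<^sub>v k2"
proof -
  have "0\<^sub>v (k1 + k2) = 0\<^sub>v k1 @\<^sub>v (0\<^sub>v k2 :: 'a vec)" by (rule eq_vecI) auto
  then show ?thesis using assms by simp
qed

lemma carrier_vec_add_eq_image:
  "carrier_vec (k1 + k2) = (\<lambda>(v, w). v @\<^sub>v w) ` (carrier_vec k1 \<times> carrier_vec k2)"
proof -
  have "u \<in> (\<lambda>(v, w). v @\<^sub>v w) ` (carrier_vec k1 \<times> carrier_vec k2)"
    if "u \<in> carrier_vec (k1 + k2)" for u :: "'a vec"
  proof (rule rev_image_eqI)
    show "(vec_first u k1, vec_last u k2) \<in> carrier_vec k1 \<times> carrier_vec k2" by simp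
    show "u = (\<lambda>(v, w). v @\<^sub>v w) (vec_first u k1, vec_last u k2)" using that by simp
  qed
  then show ?thesis by auto
qed

lemma carrier_vec_add3_eq_image:
  "carrier_vec (k1 + (k2 + k3))
    = (\<lambda>(u, v, w). u @\<^sub>v v @\<^sub>v w) ` (carrier_vec k1 \<times> carrier_vec k2 \<times> carrier_vec k3)"
proof -
  have "x \<in> (\<lambda>(u, v, w). u @\<^sub>v v @\<^sub>v w) ` (carrier_vec k1 \<times> carrier_vec k2 \<times> carrier_vec k3)"
    if "x \<in> carrier_vec (k1 + (k2 + k3))" for x :: "'a vec"
  proof (rule rev_image_eqI)
    let ?y = "vec_last x (k2 + k3)"
    show "(vec_first x k1, vec_first ?y k2, vec_last ?y k3) \<in> carrier_vec k1 \<times> carrier_vec k2 \<times> carrier_vec k3"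
      by simp
    have "?y = vec_first ?y k2 @\<^sub>v vec_last ?y k3" by simp
    then show "x = (\<lambda>(u, v, w). u @\<^sub>v v @\<^sub>v w) (vec_first x k1, vec_first ?y k2, vec_last ?y k3)"
      using that by (metis case_prod_conv vec_first_last_append)
  qed
  then show ?thesis by auto
qed

lemma vec_first_append[simp]: "v \<in> carrier_vec n \<Longrightarrow> vec_first (v @\<^sub>v w) n = v"
  by (rule eq_vecI) (auto simp: vec_first_def)

lemma vec_last_append[simp]: "w \<in> carrier_vec n \<Longrightarrow> vec_last (v @\<^sub>v w) n = w"
  by (rule eq_vecI) (auto simp: vec_last_def)

lemma transpose_append_rows_mult_vec:
  assumes X: "X \<in> carrier_mat k1 m" and Y: "Y \<in> carrier_mat k2 m"
    and b: "b \<in> carrier_vec k1" and c: "c \<in> carrier_vec k2"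
  shows "(X @\<^sub>r Y)\<^sup>T *\<^sub>v (b @\<^sub>v c) = X\<^sup>T *\<^sub>v b + Y\<^sup>T *\<^sub>v c"
proof (rule eq_vecI)
  fix i assume "i < dim_vec (X\<^sup>T *\<^sub>v b + Y\<^sup>T *\<^sub>v c)"
  then have i: "i < m" using Y by simp
  have "col (X @\<^sub>r Y) i = col X i @\<^sub>v col Y i"
    unfolding append_rows_def using X Y i by (subst col_four_block_mat(1)[of _ k1 m _ 0 _ k2]) auto
  then have "((X @\<^sub>r Y)\<^sup>T *\<^sub>v (b @\<^sub>v c)) $ i = (col X i @\<^sub>v col Y i) \<bullet> (b @\<^sub>v c)"
    using X Y i by (simp add: append_rows_def)
  also have "\<dots> = col X i \<bullet> b + col Y i \<bullet> c"
    by (rule scalar_prod_append) (use X Y b c in auto)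
  finally show "((X @\<^sub>r Y)\<^sup>T *\<^sub>v (b @\<^sub>v c)) $ i = (X\<^sup>T *\<^sub>v b + Y\<^sup>T *\<^sub>v c) $ i"
    using X Y i by simp
qed (use X Y in \<open>simp add: append_rows_def\<close>)

lemma zero_mat_mult_vec:
  "v \<in> carrier_vec nc \<Longrightarrow> 0\<^sub>m nr nc *\<^sub>v v = (0\<^sub>v nr :: 'a::semiring_0 vec)"
  by (rule eq_vecI) auto

lemma mult_mat_vec_zero:
  "A \<in> carrier_mat nr nc \<Longrightarrow> A *\<^sub>v 0\<^sub>v nc = (0\<^sub>v nr :: 'a::semiring_0 vec)"
  by (rule eq_vecI) auto

lemma smult_vec_zero: "c \<cdot>\<^sub>v 0\<^sub>v n = (0\<^sub>v n :: 'a::mult_zero vec)"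
  by (rule eq_vecI) auto

lemma vec_eq_0_iff_orthogonal:
  fixes w :: "'a::comm_ring_1 vec"
  assumes "w \<in> carrier_vec k"
  shows "w = 0\<^sub>v k \<longleftrightarrow> (\<forall>a \<in> carrier_vec k. a \<bullet> w = 0)"
proof
  assume "\<forall>a \<in> carrier_vec k. a \<bullet> w = 0"
  then have "w $ j = 0" if "j < k" for j
    using scalar_prod_left_unit[OF assms that] that by (metis unit_vec_carrier)
  then show "w = 0\<^sub>v k" using assms by (intro eq_vecI) auto
qed (use assms in simp)

lemma mat_kernel_append_rows:
  assumes "X \<in> carrier_mat k1 m" and "Y \<in> carrier_mat k2 m"
  shows "mat_kernel (X @\<^sub>r Y) = mat_kernel X \<inter> mat_kernel Y"
  using assms
  by (auto simp: mat_kernel[OF carrier_append_rows[OF assms]] mat_kernel[OF assms(1)]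
      mat_kernel[OF assms(2)] mat_mult_append append_vec_eq_0_iff)

lemma diff_eq_0_iff_vec:
  fixes v w :: "'a::ab_group_add vec"
  assumes "v \<in> carrier_vec n" and "w \<in> carrier_vec n"
  shows "v - w = 0\<^sub>v n \<longleftrightarrow> v = w"
  using assms by (auto simp: vec_eq_iff)

lemma diff_eq_diff_if_add_eq_add_vec:
  fixes p p' q q' :: "'a::ab_group_add vec"
  assumes "p \<in> carrier_vec n" "p' \<in> carrier_vec n" "q \<in> carrier_vec n" "q' \<in> carrier_vec n"
    and eq: "p + q = p' + q'"
  shows "p - p' = q' - q"
proof (rule eq_vecI)
  fix i assume "i < dim_vec (q' - q)"
  then have i: "i < n" using assms by simp
  have [simp]: "dim_vec p = n" "dim_vec p' = n" "dim_vec q = n" "dim_vec q' = n" using assms by auto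
  have "(p + q) $ i = (p' + q') $ i" using eq by simp
  then show "(p - p') $ i = (q' - q) $ i" using i by (simp add: algebra_simps)
qed (use assms in simp)

lemma transpose_mult_vec_eq_0_iff:
  fixes B :: "'a::field mat"
  assumes B: "B \<in> carrier_mat k m" and li: "rows_lin_indep m B" and v: "v \<in> carrier_vec k"
  shows "B\<^sup>T *\<^sub>v v = 0\<^sub>v m \<longleftrightarrow> v = 0\<^sub>v k"
proof
  interpret V: vec_space "TYPE('a)" m .
  assume "B\<^sup>T *\<^sub>v v = 0\<^sub>v m"
  moreover have "B\<^sup>T \<in> carrier_mat m k" using B by simp
  moreover have "\<not> V.lin_dep (set (cols B\<^sup>T))" and "distinct (cols B\<^sup>T)"
    using li by (simp_all add: rows_lin_indep_def)
  ultimately show "v = 0\<^sub>v k" using V.lin_depI[of "B\<^sup>T" k v] v by auto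
qed (use B in auto)

lemma inj_on_transpose_mult_vec:
  fixes B :: "'a::field mat"
  assumes B: "B \<in> carrier_mat k m" and li: "rows_lin_indep m B"
  shows "inj_on (\<lambda>a. B\<^sup>T *\<^sub>v a) (carrier_vec k)"
proof (rule inj_onI)
  fix a a' assume a: "a \<in> carrier_vec k" and a': "a' \<in> carrier_vec k" and eq: "B\<^sup>T *\<^sub>v a = B\<^sup>T *\<^sub>v a'"
  have BT: "B\<^sup>T \<in> carrier_mat m k" using B by simp
  have "B\<^sup>T *\<^sub>v (a - a') = 0\<^sub>v m" using eq BT a' by (simp add: mult_minus_distrib_mat_vec[OF BT a a'])
  then show "a = a'" using a a' by (simp add: transpose_mult_vec_eq_0_iff[OF B li] diff_eq_0_iff_vec)
qed

section \<open>Subspaces of \<open>F\<^sup>m\<close> and their cardinality\<close>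

lemma subspace_vecI:
  fixes W :: "'a::field vec set"
  assumes "W \<subseteq> carrier_vec m" and "0\<^sub>v m \<in> W"
    and "\<And>v w. v \<in> W \<Longrightarrow> w \<in> W \<Longrightarrow> v + w \<in> W"
    and "\<And>c v. v \<in> W \<Longrightarrow> c \<cdot>\<^sub>v v \<in> W"
  shows "subspace class_ring W (module_vec TYPE('a) m)"
proof -
  interpret V: vec_space "TYPE('a)" m .
  have "submodule class_ring W V.V" unfolding submodule_def using assms V.module_axioms by auto
  then show ?thesis unfolding subspace_def using V.vectorspace_axioms by auto
qed

lemma subspace_vecD:
  fixes W :: "'a::field vec set"
  assumes "subspace class_ring W (module_vec TYPE('a) m)"
  shows "W \<subseteq> carrier_vec m" and "0\<^sub>v m \<in> W"
    and "\<And>v w. v \<in> W \<Longrightarrow> w \<in> W \<Longrightarrow> v + w \<in> W"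
    and "\<And>c v. v \<in> W \<Longrightarrow> c \<cdot>\<^sub>v v \<in> W"
proof -
  have sm: "submodule class_ring W (module_vec TYPE('a) m)" using assms by (simp add: subspace_def)
  show "W \<subseteq> carrier_vec m" using submodule.subset[OF sm] by (simp add: module_vec_simps)
  show "0\<^sub>v m \<in> W" using submodule.zero_closed[OF sm] by (simp add: module_vec_simps)
  show "\<And>v w. v \<in> W \<Longrightarrow> w \<in> W \<Longrightarrow> v + w \<in> W"
    using submodule.m_closed[OF sm] by (simp add: module_vec_simps)
  show "\<And>c v. v \<in> W \<Longrightarrow> c \<cdot>\<^sub>v v \<in> W"
    using submodule.smult_closed[OF sm] by (simp add: module_vec_simps class_ring_simps)
qed

lemma subspace_Int:
  fixes W1 W2 :: "'a::field vec set"
  assumes "subspace class_ring W1 (module_vec TYPE('a) m)"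
    and "subspace class_ring W2 (module_vec TYPE('a) m)"
  shows "subspace class_ring (W1 \<inter> W2) (module_vec TYPE('a) m)"
  using subspace_vecD[OF assms(1)] subspace_vecD[OF assms(2)] by (intro subspace_vecI) auto

lemma rowsp_eq_image:
  assumes "B \<in> carrier_mat k m"
  shows "rowsp m B = (\<lambda>a. B\<^sup>T *\<^sub>v a) ` carrier_vec k"
proof -
  interpret V: vec_space "TYPE('a::field)" m .
  show ?thesis unfolding rowsp_def V.row_space_eq[OF assms] using assms by auto
qed

lemma subspace_rowsp:
  fixes B :: "'a::field mat"
  assumes "B \<in> carrier_mat k m"
  shows "subspace class_ring (rowsp m B) (module_vec TYPE('a) m)"
proof -
  interpret V: vec_space "TYPE('a)" m .
  show ?thesis unfolding rowsp_def V.row_space_def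
    by (rule V.span_is_subspace) (use assms in \<open>auto simp: rows_def\<close>)
qed

lemma card_rowsp:
  fixes B :: "'a::{finite,field} mat"
  assumes "B \<in> carrier_mat k m" and "rows_lin_indep m B"
  shows "card (rowsp m B) = CARD('a) ^ k"
  using card_image[OF inj_on_transpose_mult_vec[OF assms]]
  by (simp add: rowsp_eq_image[OF assms(1)] card_carrier_vec)

text \<open>A subspace is the row space of a matrix whose rows form a basis of it.\<close>

lemma card_subspace:
  fixes W :: "'a::{finite,field} vec set"
  assumes W: "subspace class_ring W (module_vec TYPE('a) m)"
  shows "card W = CARD('a) ^ sdim m W"
proof -
  interpret V: vec_space "TYPE('a)" m .
  interpret W: vectorspace class_ring "V.vs W" using V.subspace_is_vs[OF W] .
  have subm: "submodule class_ring W V.V" using W by (simp add: subspace_def)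
  have sub: "W \<subseteq> carrier_vec m" by (rule subspace_vecD(1)[OF W])
  have "W.span W = W"
    using V.span_li_not_depend(1)[OF subset_refl subm] V.span_is_subset[OF subset_refl subm]
      V.in_own_span[OF sub] by auto
  then have "W.fin_dim" unfolding W.fin_dim_def using finite_subset[OF sub finite_carrier_vec] by auto
  then obtain \<beta> where fin: "finite \<beta>" and basis: "W.basis \<beta>" using W.finite_basis_exists by auto
  then have \<beta>W: "\<beta> \<subseteq> W" and "\<not> W.lin_dep \<beta>" and "W.span \<beta> = W" unfolding W.basis_def by auto
  then have li: "\<not> V.lin_dep \<beta>" and span: "V.span \<beta> = W"
    using V.span_li_not_depend[OF \<beta>W subm] by simp_all
  obtain bl where bl: "set bl = \<beta>" "distinct bl" using finite_distinct_list[OF fin] by auto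
  define B where "B = mat_of_rows m bl"
  have rows: "rows B = bl" using bl \<beta>W sub unfolding B_def by auto
  have "W = rowsp m B" unfolding rowsp_def V.row_space_def rows bl span ..
  moreover have "card (rowsp m B) = CARD('a) ^ length bl"
    by (rule card_rowsp) (use rows bl li in \<open>auto simp: B_def rows_lin_indep_def\<close>)
  ultimately show ?thesis
    using W.dim_basis[OF fin basis] distinct_card[OF bl(2)] bl(1) unfolding sdim_def by simp
qed

lemma sdim_eqI:
  fixes W :: "'a::{finite,field} vec set"
  assumes "subspace class_ring W (module_vec TYPE('a) m)" and "card W = CARD('a) ^ k"
  shows "sdim m W = k"
  using card_subspace[OF assms(1)] assms(2) card_field_gt_1[where 'a='a] power_inject_exp by metis

section \<open>Euclidean and symplectic duals\<close>

lemma subspace_edual: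
  fixes V :: "'a::field vec set"
  assumes V: "V \<subseteq> carrier_vec m"
  shows "subspace class_ring (edual m V) (module_vec TYPE('a) m)"
proof (rule subspace_vecI)
  show "edual m V \<subseteq> carrier_vec m" unfolding edual_def by auto
next
  show "0\<^sub>v m \<in> edual m V" unfolding edual_def using V by auto
next
  fix v w assume "v \<in> edual m V" and "w \<in> edual m V"
  then show "v + w \<in> edual m V"
    using V unfolding edual_def by (auto simp: subset_iff add_scalar_prod_distrib[of _ m])
next
  fix c v assume "v \<in> edual m V"
  then show "c \<cdot>\<^sub>v v \<in> edual m V" using V unfolding edual_def by (auto simp: subset_iff)
qed

lemma edual_rowsp:
  assumes B: "B \<in> carrier_mat k m"
  shows "edual m (rowsp m B) = mat_kernel B"
proof -
  have "x \<bullet> (B\<^sup>T *\<^sub>v a) = a \<bullet> (B *\<^sub>v x)" if "x \<in> carrier_vec m" "a \<in> carrier_vec k" for x a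
    using comm_scalar_prod[of x m] transpose_vec_mult_scalar[OF B] B that by simp
  then show ?thesis
    using B by (auto simp: edual_def rowsp_eq_image[OF B] mat_kernel vec_eq_0_iff_orthogonal)
qed

lemma subspace_mat_kernel:
  fixes B :: "'a::field mat"
  assumes B: "B \<in> carrier_mat k m"
  shows "subspace class_ring (mat_kernel B) (module_vec TYPE('a) m)"
  unfolding edual_rowsp[OF B, symmetric]
  by (rule subspace_edual) (use subspace_vecD(1)[OF subspace_rowsp[OF B]] in simp)

lemma subspace_sdual:
  fixes D :: "'a::field vec set"
  shows "subspace class_ring (sdual n D) (module_vec TYPE('a) (2*n))"
proof -
  have first: "vec_first (u + u') n = vec_first u n + vec_first u' n"
    and last: "vec_last (u + u') n = vec_last u n + vec_last u' n"
    and first_smult: "vec_first (c \<cdot>\<^sub>v u) n = c \<cdot>\<^sub>v vec_first u n"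
    and last_smult: "vec_last (c \<cdot>\<^sub>v u) n = c \<cdot>\<^sub>v vec_last u n"
    if "u \<in> carrier_vec (2*n)" "u' \<in> carrier_vec (2*n)" for u u' :: "'a vec" and c
    using that by (auto simp: vec_first_def vec_last_def)
  have zero: "vec_first (0\<^sub>v (2*n)) n = (0\<^sub>v n :: 'a vec)" "vec_last (0\<^sub>v (2*n)) n = (0\<^sub>v n :: 'a vec)"
    by (auto simp: vec_first_def vec_last_def intro!: eq_vecI)
  show ?thesis
  proof (rule subspace_vecI)
    show "sdual n D \<subseteq> carrier_vec (2*n)" unfolding sdual_def by auto
  next
    show "0\<^sub>v (2*n) \<in> sdual n D" unfolding sdual_def sprod_def by (simp add: zero)
  next
    fix u u' assume "u \<in> sdual n D" and "u' \<in> sdual n D"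
    then show "u + u' \<in> sdual n D"
      unfolding sdual_def sprod_def
      by (auto simp: first last add_scalar_prod_distrib[of _ n] scalar_prod_add_distrib[of _ n])
  next
    fix c u assume "u \<in> sdual n D"
    then show "c \<cdot>\<^sub>v u \<in> sdual n D"
      unfolding sdual_def sprod_def by (auto simp: first_smult last_smult right_diff_distrib[symmetric])
  qed
qed

lemma sprod_eq_scalar_prod_twist:
  fixes u v :: "'a::comm_ring vec"
  assumes v: "v \<in> carrier_vec (2*n)"
  shows "sprod n u v = v \<bullet> ((- vec_last u n) @\<^sub>v vec_first u n)"
proof -
  let ?x = "vec_first u n" and ?y = "vec_last u n" and ?z = "vec_first v n" and ?w = "vec_last v n"
  have "v = ?z @\<^sub>v ?w" using v by (simp add: mult_2)
  then have "v \<bullet> ((- ?y) @\<^sub>v ?x) = ?z \<bullet> (- ?y) + ?w \<bullet> ?x"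
    by (metis scalar_prod_append uminus_carrier_vec vec_first_carrier vec_last_carrier)
  also have "\<dots> = ?x \<bullet> ?w - ?z \<bullet> ?y"
    using comm_scalar_prod[of ?w n ?x] by (simp add: algebra_simps)
  finally show ?thesis unfolding sprod_def by simp
qed

lemma sdual_rowsp:
  assumes G: "G \<in> carrier_mat k (2*n)"
  shows "sdual n (rowsp (2*n) G)
    = {u \<in> carrier_vec (2*n). G *\<^sub>v ((- vec_last u n) @\<^sub>v vec_first u n) = 0\<^sub>v k}"
proof -
  have R: "rowsp (2*n) G \<subseteq> carrier_vec (2*n)" by (rule subspace_vecD(1)[OF subspace_rowsp[OF G]])
  have tw: "(- vec_last u n) @\<^sub>v vec_first u n \<in> carrier_vec (2*n)" for u :: "'a vec"
    by (simp add: mult_2)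
  have "u \<in> sdual n (rowsp (2*n) G) \<longleftrightarrow>
      u \<in> carrier_vec (2*n) \<and> (- vec_last u n) @\<^sub>v vec_first u n \<in> edual (2*n) (rowsp (2*n) G)" for u
    using R tw unfolding sdual_def edual_def
    by (auto simp: sprod_eq_scalar_prod_twist subset_iff comm_scalar_prod[of _ "2*n"])
  then show ?thesis using G tw by (auto simp: edual_rowsp[OF G] mat_kernel)
qed

section \<open>Weights\<close>

lemma dH_le_hwt: "v \<in> V \<Longrightarrow> v \<noteq> 0\<^sub>v m \<Longrightarrow> dH m V \<le> hwt v"
  unfolding dH_def by (rule cInf_lower) auto

lemma swt_append:
  assumes "x \<in> carrier_vec n" and "y \<in> carrier_vec n"
  shows "swt n (x @\<^sub>v y) = card {j. j < n \<and> (x $ j \<noteq> 0 \<or> y $ j \<noteq> 0)}"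
  unfolding swt_def using assms by (intro arg_cong[where f=card]) auto

lemma hwt_le_swt_append:
  assumes x: "x \<in> carrier_vec n" and y: "y \<in> carrier_vec n"
  shows "hwt x \<le> swt n (x @\<^sub>v y)" and "hwt y \<le> swt n (x @\<^sub>v y)"
  unfolding swt_append[OF x y] hwt_def using x y by (auto intro!: card_mono)

lemma hwt_eq_sum: "v \<in> carrier_vec n \<Longrightarrow> hwt v = (\<Sum>j<n. if v $ j \<noteq> 0 then 1 else 0)"
  unfolding hwt_def by (simp add: sum.If_cases Collect_conj_eq lessThan_def Int_commute)

text \<open>If \<open>(x, y) \<noteq> (0, 0)\<close>, exactly one of the \<open>q + 1\<close> values \<open>x\<close> and \<open>y + c x\<close>
  (indexed by \<open>None\<close> and \<open>Some c\<close>) vanishes.\<close>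

lemma card_pencil_nonzero:
  fixes x y :: "'a::{finite,field}"
  shows "card {l. case_option x (\<lambda>c. y + c * x) l \<noteq> 0} = (if x \<noteq> 0 \<or> y \<noteq> 0 then CARD('a) else 0)"
proof (cases "x = 0")
  case True
  then have "{l. case_option x (\<lambda>c. y + c * x) l \<noteq> 0} = (if y = 0 then {} else range Some)"
    by (auto split: option.splits)
  then show ?thesis using True by (simp add: card_image)
next
  case False
  then have "{l. case_option x (\<lambda>c. y + c * x) l \<noteq> 0} = UNIV - {Some (- y / x)}"
    by (auto split: option.splits simp: field_simps add_eq_0_iff)
  then show ?thesis using False by simp
qed

lemma swt_pencil_bound:
  fixes x y :: "'a::{finite,field} vec"
  assumes x: "x \<in> carrier_vec n" and y: "y \<in> carrier_vec n"
    and wx: "d \<le> hwt x" and wy: "\<And>c. d \<le> hwt (y + c \<cdot>\<^sub>v x)"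
  shows "(CARD('a) + 1) * d \<le> CARD('a) * swt n (x @\<^sub>v y)"
proof -
  define f :: "'a option \<Rightarrow> 'a vec" where "f = case_option x (\<lambda>c. y + c \<cdot>\<^sub>v x)"
  have f: "f l \<in> carrier_vec n" for l using x y by (auto simp: f_def split: option.splits)
  have fj: "f l $ j = case_option (x $ j) (\<lambda>c. y $ j + c * x $ j) l" if "j < n" for l j
    using x y that by (auto simp: f_def split: option.splits)
  have "(CARD('a) + 1) * d = (\<Sum>l\<in>(UNIV :: 'a option set). d)" by simp
  also have "\<dots> \<le> (\<Sum>l\<in>UNIV. hwt (f l))"
    by (rule sum_mono) (use wx wy in \<open>auto simp: f_def split: option.splits\<close>)
  also have "\<dots> = (\<Sum>j<n. \<Sum>l\<in>UNIV. if f l $ j \<noteq> 0 then 1 else 0)"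
    unfolding hwt_eq_sum[OF f] by (rule sum.swap)
  also have "\<dots> = (\<Sum>j<n. if x $ j \<noteq> 0 \<or> y $ j \<noteq> 0 then CARD('a) else 0)"
    by (rule sum.cong) (simp_all add: sum.If_cases fj card_pencil_nonzero)
  also have "\<dots> = CARD('a) * swt n (x @\<^sub>v y)"
    by (simp add: swt_append[OF x y] sum.If_cases Collect_conj_eq lessThan_def Int_commute)
  finally show ?thesis .
qed

lemma pencil_ne_0_if_no_eigenvalue:
  fixes A B :: "'a::field mat"
  assumes A: "A \<in> carrier_mat t t" and B: "B \<in> carrier_mat t n"
    and x: "x \<in> carrier_vec n" and y: "y \<in> carrier_vec n"
    and xy: "(A * B) *\<^sub>v x = B *\<^sub>v y" and Bx: "B *\<^sub>v x \<noteq> 0\<^sub>v t"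
    and noev: "\<forall>e. \<not> eigenvalue A e"
  shows "y + c \<cdot>\<^sub>v x \<noteq> 0\<^sub>v n"
proof
  assume "y + c \<cdot>\<^sub>v x = 0\<^sub>v n"
  moreover have "B *\<^sub>v (y + c \<cdot>\<^sub>v x) = B *\<^sub>v y + c \<cdot>\<^sub>v (B *\<^sub>v x)"
    using B x y by (simp add: mult_add_distrib_mat_vec[OF B] mult_mat_vec[OF B])
  moreover note mult_mat_vec_zero[OF B]
  ultimately have "B *\<^sub>v y + c \<cdot>\<^sub>v (B *\<^sub>v x) = 0\<^sub>v t" by simp
  then have "A *\<^sub>v (B *\<^sub>v x) = (- c) \<cdot>\<^sub>v (B *\<^sub>v x)"
    using xy A B x by (auto simp: vec_eq_iff add_eq_0_iff)
  then have "eigenvector A (B *\<^sub>v x) (- c)" using A B x Bx unfolding eigenvector_def by auto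
  then show False using noev unfolding eigenvalue_def by blast
qed

section \<open>The code \<open>D\<^sub>A\<close>\<close>

locale DA_code =
  fixes Br Bt A :: "'a::{finite,field} mat" and n r t :: nat and C :: "'a vec set"
  assumes Br: "Br \<in> carrier_mat r n" and Bt: "Bt \<in> carrier_mat t n"
    and Br_li: "rows_lin_indep n Br" and Bt_li: "rows_lin_indep n Bt"
    and C_def: "C = rowsp n (Br @\<^sub>r Bt)"
    and direct: "rowsp n Br \<inter> rowsp n Bt = {0\<^sub>v n}"
    and Bt_dual: "rowsp n Bt \<subseteq> edual n C"
    and A: "A \<in> carrier_mat t t"
begin

abbreviation DA :: "'a vec set" where "DA \<equiv> D_A n A Br Bt"

definition C_word :: "'a vec \<Rightarrow> 'a vec \<Rightarrow> 'a vec" where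
  "C_word b a = Br\<^sup>T *\<^sub>v b + Bt\<^sup>T *\<^sub>v a"

definition DA_word :: "'a vec \<Rightarrow> 'a vec \<Rightarrow> 'a vec \<Rightarrow> 'a vec" where
  "DA_word a b c = C_word b a @\<^sub>v C_word c (A\<^sup>T *\<^sub>v a)"

text \<open>Coordinates \<open>b\<close> of the words of \<open>\<langle>B\<^sub>r\<rangle>\<close> lying in \<open>C\<^sup>\<perp>\<close>; the entanglement
  \<open>c = r - dim gram_ker\<close> is the rank of the Gram matrix \<open>B\<^sub>r B\<^sub>r\<^sup>T\<close>.\<close>

definition gram_ker :: "'a vec set" where
  "gram_ker = mat_kernel (Br * Br\<^sup>T)"

lemma gram_carrier: "Br * Br\<^sup>T \<in> carrier_mat r r"
  using Br by simp

lemma dims[simp]: "dim_row Br = r" "dim_col Br = n" "dim_row Bt = t" "dim_col Bt = n"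
  "dim_row A = t" "dim_col A = t"
  using Br Bt A by auto

lemma C_word_carrier[simp]: "C_word b a \<in> carrier_vec n"
  unfolding C_word_def by (simp add: carrier_vecI)

lemma gram_ker_carrier: "gram_ker \<subseteq> carrier_vec r"
  unfolding gram_ker_def using mat_kernel_carrier[OF gram_carrier] .

lemma C_eq_image: "C = case_prod C_word ` (carrier_vec r \<times> carrier_vec t)"
proof -
  have BB: "Br @\<^sub>r Bt \<in> carrier_mat (r + t) n" using Br Bt by auto
  have "C = (\<lambda>w. (Br @\<^sub>r Bt)\<^sup>T *\<^sub>v w) ` (\<lambda>(b, a). b @\<^sub>v a) ` (carrier_vec r \<times> carrier_vec t)"
    unfolding C_def rowsp_eq_image[OF BB] carrier_vec_add_eq_image ..
  also have "\<dots> = case_prod C_word ` (carrier_vec r \<times> carrier_vec t)"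
    unfolding image_image
    by (rule image_cong) (auto simp: C_word_def transpose_append_rows_mult_vec[OF Br Bt])
  finally show ?thesis .
qed

lemma C_word_in_C: "b \<in> carrier_vec r \<Longrightarrow> a \<in> carrier_vec t \<Longrightarrow> C_word b a \<in> C"
  unfolding C_eq_image by auto

lemma C_carrier: "C \<subseteq> carrier_vec n"
  unfolding C_eq_image by auto

lemma C_word_eq_iff:
  assumes b: "b \<in> carrier_vec r" "b' \<in> carrier_vec r" and a: "a \<in> carrier_vec t" "a' \<in> carrier_vec t"
  shows "C_word b a = C_word b' a' \<longleftrightarrow> b = b' \<and> a = a'"
proof
  assume eq: "C_word b a = C_word b' a'"
  have BrT: "Br\<^sup>T \<in> carrier_mat n r" and BtT: "Bt\<^sup>T \<in> carrier_mat n t" using Br Bt by simp_all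
  have "Br\<^sup>T *\<^sub>v b - Br\<^sup>T *\<^sub>v b' = Bt\<^sup>T *\<^sub>v a' - Bt\<^sup>T *\<^sub>v a"
    using eq b a BrT BtT unfolding C_word_def by (intro diff_eq_diff_if_add_eq_add_vec[of _ n]) auto
  then have "Br\<^sup>T *\<^sub>v (b - b') = Bt\<^sup>T *\<^sub>v (a' - a)"
    by (simp add: mult_minus_distrib_mat_vec[OF BrT b] mult_minus_distrib_mat_vec[OF BtT a(2) a(1)])
  moreover have "Br\<^sup>T *\<^sub>v (b - b') \<in> rowsp n Br" and "Bt\<^sup>T *\<^sub>v (a' - a) \<in> rowsp n Bt"
    using b a by (auto simp: rowsp_eq_image[OF Br] rowsp_eq_image[OF Bt])
  ultimately have "Br\<^sup>T *\<^sub>v (b - b') = 0\<^sub>v n" and "Bt\<^sup>T *\<^sub>v (a' - a) = 0\<^sub>v n" using direct by auto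
  then have "b - b' = 0\<^sub>v r" and "a' - a = 0\<^sub>v t"
    using b a by (simp_all add: transpose_mult_vec_eq_0_iff[OF Br Br_li] transpose_mult_vec_eq_0_iff[OF Bt Bt_li])
  then show "b = b' \<and> a = a'" using b a by (simp add: diff_eq_0_iff_vec)
qed simp

lemma inj_cword: "inj_on (case_prod C_word) (carrier_vec r \<times> carrier_vec t)"
  by (rule inj_onI) (auto simp: C_word_eq_iff)

lemma C_subset_ker_Bt: "C \<subseteq> mat_kernel Bt"
proof
  fix w assume w: "w \<in> C"
  have "a \<bullet> (Bt *\<^sub>v w) = 0" if a: "a \<in> carrier_vec t" for a
  proof -
    have "Bt\<^sup>T *\<^sub>v a \<in> edual n C" using Bt_dual a by (auto simp: rowsp_eq_image[OF Bt])
    then have "(Bt\<^sup>T *\<^sub>v a) \<bullet> w = 0" using w unfolding edual_def by blast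
    then show ?thesis using transpose_vec_mult_scalar[OF Bt _ a] w C_carrier by auto
  qed
  moreover have wn: "w \<in> carrier_vec n" using w C_carrier by blast
  moreover have "Bt *\<^sub>v w \<in> carrier_vec t" using wn Bt by simp
  ultimately have "Bt *\<^sub>v w = 0\<^sub>v t" by (simp add: vec_eq_0_iff_orthogonal)
  then show "w \<in> mat_kernel Bt" using wn by (simp add: mat_kernel[OF Bt])
qed

lemma edual_C: "edual n C = mat_kernel Br \<inter> mat_kernel Bt"
  unfolding C_def edual_rowsp[OF carrier_append_rows[OF Br Bt]] by (rule mat_kernel_append_rows[OF Br Bt])

lemma Br_mult_cword:
  assumes b: "b \<in> carrier_vec r" and a: "a \<in> carrier_vec t"
  shows "Br *\<^sub>v C_word b a = (Br * Br\<^sup>T) *\<^sub>v b"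
proof -
  have "Bt\<^sup>T *\<^sub>v a \<in> edual n C" using Bt_dual a by (auto simp: rowsp_eq_image[OF Bt])
  then have "Br *\<^sub>v (Bt\<^sup>T *\<^sub>v a) = 0\<^sub>v r" by (simp add: edual_C mat_kernel[OF Br])
  then show ?thesis
    using b a Br Bt by (simp add: C_word_def mult_add_distrib_mat_vec[of Br r n])
qed

lemma C_word_in_edual_C_iff:
  assumes b: "b \<in> carrier_vec r" and a: "a \<in> carrier_vec t"
  shows "C_word b a \<in> edual n C \<longleftrightarrow> b \<in> gram_ker"
proof -
  have "Bt *\<^sub>v C_word b a = 0\<^sub>v t" using C_subset_ker_Bt C_word_in_C[OF b a] by (auto simp: mat_kernel[OF Bt])
  then show ?thesis
    using b by (simp add: edual_C mat_kernel[OF Br] mat_kernel[OF Bt] gram_ker_def mat_kernel[OF gram_carrier]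
        Br_mult_cword[OF b a] del: assoc_mult_mat_vec)
qed

lemma C_Int_edual_C: "C \<inter> edual n C = case_prod C_word ` (gram_ker \<times> carrier_vec t)"
proof -
  have "C \<inter> edual n C = case_prod C_word ` {x \<in> carrier_vec r \<times> carrier_vec t. case_prod C_word x \<in> edual n C}"
    by (subst (1) C_eq_image) blast
  also have "{x \<in> carrier_vec r \<times> carrier_vec t. case_prod C_word x \<in> edual n C} = gram_ker \<times> carrier_vec t"
    by (auto simp: C_word_in_edual_C_iff subsetD[OF gram_ker_carrier])
  finally show ?thesis .
qed

lemma DA_gen_carrier: "DA_gen A Br Bt \<in> carrier_mat (t + (r + r)) (2*n)"
  unfolding DA_gen_def using A Br Bt by (auto simp: mult_2)

lemma DA_gen_transpose_mult:
  assumes a: "a \<in> carrier_vec t" and b: "b \<in> carrier_vec r" and c: "c \<in> carrier_vec r"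
  shows "(DA_gen A Br Bt)\<^sup>T *\<^sub>v (a @\<^sub>v b @\<^sub>v c) = DA_word a b c"
proof -
  have Z: "0\<^sub>m r n \<in> carrier_mat r n" by simp
  have ABt: "A * Bt \<in> carrier_mat t n" using A Bt by simp
  have "(DA_gen A Br Bt)\<^sup>T = four_block_mat Bt\<^sup>T (Br @\<^sub>r 0\<^sub>m r n)\<^sup>T (A * Bt)\<^sup>T (0\<^sub>m r n @\<^sub>r Br)\<^sup>T"
    unfolding DA_gen_def dims
    by (rule transpose_four_block_mat[OF Bt ABt carrier_append_rows[OF Br Z] carrier_append_rows[OF Z Br]])
  then have "(DA_gen A Br Bt)\<^sup>T *\<^sub>v (a @\<^sub>v b @\<^sub>v c)
      = (Bt\<^sup>T *\<^sub>v a + (Br @\<^sub>r 0\<^sub>m r n)\<^sup>T *\<^sub>v (b @\<^sub>v c)) @\<^sub>v ((A * Bt)\<^sup>T *\<^sub>v a + (0\<^sub>m r n @\<^sub>r Br)\<^sup>T *\<^sub>v (b @\<^sub>v c))"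
    using four_block_mat_mult_vec[of "Bt\<^sup>T" n t "(Br @\<^sub>r 0\<^sub>m r n)\<^sup>T" "r + r" "(A * Bt)\<^sup>T" n
        "(0\<^sub>m r n @\<^sub>r Br)\<^sup>T" a "b @\<^sub>v c"] Bt ABt Br a b c by auto
  also have "\<dots> = (Bt\<^sup>T *\<^sub>v a + Br\<^sup>T *\<^sub>v b) @\<^sub>v (Bt\<^sup>T *\<^sub>v (A\<^sup>T *\<^sub>v a) + Br\<^sup>T *\<^sub>v c)"
    using transpose_append_rows_mult_vec[OF Br Z b c] transpose_append_rows_mult_vec[OF Z Br b c]
      transpose_mult[OF A Bt] A Bt Br a b c by (simp add: zero_mat_mult_vec[OF b] zero_mat_mult_vec[OF c])
  also have "\<dots> = DA_word a b c"
    unfolding DA_word_def C_word_def using A Bt Br a b c by (simp add: comm_add_vec[of _ n])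
  finally show ?thesis .
qed

lemma DA_eq_image: "DA = (\<lambda>(a, b, c). DA_word a b c) ` (carrier_vec t \<times> carrier_vec r \<times> carrier_vec r)"
proof -
  have "DA = (\<lambda>w. (DA_gen A Br Bt)\<^sup>T *\<^sub>v w) `
      (\<lambda>(a, b, c). a @\<^sub>v b @\<^sub>v c) ` (carrier_vec t \<times> carrier_vec r \<times> carrier_vec r)"
    unfolding D_A_def rowsp_eq_image[OF DA_gen_carrier] carrier_vec_add3_eq_image ..
  also have "\<dots> = (\<lambda>(a, b, c). DA_word a b c) ` (carrier_vec t \<times> carrier_vec r \<times> carrier_vec r)"
    unfolding image_image by (rule image_cong) (auto simp: DA_gen_transpose_mult)
  finally show ?thesis .
qed

lemma DA_word_eq_iff:
  assumes "a \<in> carrier_vec t" "a' \<in> carrier_vec t" and "b \<in> carrier_vec r" "b' \<in> carrier_vec r"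
    and "c \<in> carrier_vec r" "c' \<in> carrier_vec r"
  shows "DA_word a b c = DA_word a' b' c' \<longleftrightarrow> a = a' \<and> b = b' \<and> c = c'"
  using assms A unfolding DA_word_def by (auto simp: append_vec_eq[OF C_word_carrier C_word_carrier] C_word_eq_iff)

lemma inj_da_word: "inj_on (\<lambda>(a, b, c). DA_word a b c) (carrier_vec t \<times> carrier_vec r \<times> carrier_vec r)"
  by (rule inj_onI) (auto simp: DA_word_eq_iff)

lemma append_in_sdual_DA_iff:
  assumes x: "x \<in> carrier_vec n" and y: "y \<in> carrier_vec n"
  shows "x @\<^sub>v y \<in> sdual n DA \<longleftrightarrow> Br *\<^sub>v x = 0\<^sub>v r \<and> Br *\<^sub>v y = 0\<^sub>v r \<and> (A * Bt) *\<^sub>v x = Bt *\<^sub>v y"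
proof -
  have Z: "0\<^sub>m r n \<in> carrier_mat r n" by simp
  have "Bt *\<^sub>v (- y) = - (Bt *\<^sub>v y)" and "Br *\<^sub>v (- y) = - (Br *\<^sub>v y)"
    using y Bt Br by (auto simp: vec_eq_iff)
  then have prod: "DA_gen A Br Bt *\<^sub>v ((- y) @\<^sub>v x)
      = (- (Bt *\<^sub>v y) + (A * Bt) *\<^sub>v x) @\<^sub>v (- (Br *\<^sub>v y)) @\<^sub>v (Br *\<^sub>v x)"
    unfolding DA_gen_def dims using A Bt Br x y
    by (simp add: four_block_mat_mult_vec[of _ t n _ n _ "r + r"] mat_mult_append[OF Br Z]
        mat_mult_append[OF Z Br] append_vec_add[of _ r _ _ r] zero_mat_mult_vec del: assoc_mult_mat_vec)
  have "x @\<^sub>v y \<in> sdual n DA \<longleftrightarrow> DA_gen A Br Bt *\<^sub>v ((- y) @\<^sub>v x) = 0\<^sub>v (t + (r + r))"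
    unfolding D_A_def sdual_rowsp[OF DA_gen_carrier] using x y by (simp add: mult_2)
  also have "\<dots> \<longleftrightarrow> - (Bt *\<^sub>v y) + (A * Bt) *\<^sub>v x = 0\<^sub>v t \<and> - (Br *\<^sub>v y) = 0\<^sub>v r \<and> Br *\<^sub>v x = 0\<^sub>v r"
  proof -
    have "- (Bt *\<^sub>v y) + (A * Bt) *\<^sub>v x \<in> carrier_vec t" and "- (Br *\<^sub>v y) \<in> carrier_vec r"
      and "Br *\<^sub>v x \<in> carrier_vec r"
      using x y A Bt Br by auto
    then show ?thesis
      unfolding prod by (simp add: append_vec_eq_0_iff del: assoc_mult_mat_vec)
  qed
  also have "- (Bt *\<^sub>v y) + (A * Bt) *\<^sub>v x = 0\<^sub>v t \<longleftrightarrow> (A * Bt) *\<^sub>v x = Bt *\<^sub>v y"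
    using A Bt x y by (auto simp: vec_eq_iff add_eq_0_iff simp del: assoc_mult_mat_vec)
  also have "- (Br *\<^sub>v y) = 0\<^sub>v r \<longleftrightarrow> Br *\<^sub>v y = 0\<^sub>v r"
    using Br y by (simp add: uminus_zero_vec_eq)
  finally show ?thesis by blast
qed

lemma DA_word_in_sdual_DA_iff:
  assumes a: "a \<in> carrier_vec t" and b: "b \<in> carrier_vec r" and c: "c \<in> carrier_vec r"
  shows "DA_word a b c \<in> sdual n DA \<longleftrightarrow> b \<in> gram_ker \<and> c \<in> gram_ker"
proof -
  have Aa: "A\<^sup>T *\<^sub>v a \<in> carrier_vec t" using A a by simp
  have Bt_b: "Bt *\<^sub>v C_word b a = 0\<^sub>v t" and Bt_c: "Bt *\<^sub>v C_word c (A\<^sup>T *\<^sub>v a) = 0\<^sub>v t"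
    using C_subset_ker_Bt C_word_in_C[OF b a] C_word_in_C[OF c Aa] by (auto simp: mat_kernel[OF Bt])
  have "(A * Bt) *\<^sub>v C_word b a = Bt *\<^sub>v C_word c (A\<^sup>T *\<^sub>v a)"
    using A Bt by (simp add: Bt_b Bt_c mult_mat_vec_zero[OF A])
  then show ?thesis
    unfolding DA_word_def append_in_sdual_DA_iff[OF C_word_carrier C_word_carrier]
    by (simp add: Br_mult_cword[OF b a] Br_mult_cword[OF c Aa] gram_ker_def mat_kernel[OF gram_carrier] b c
        del: assoc_mult_mat_vec)
qed

lemma hull_eq_image:
  "DA \<inter> sdual n DA = (\<lambda>(a, b, c). DA_word a b c) ` (carrier_vec t \<times> gram_ker \<times> gram_ker)"
proof -
  let ?f = "\<lambda>(a, b, c). DA_word a b c" and ?V = "carrier_vec t \<times> carrier_vec r \<times> carrier_vec r"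
  have "DA \<inter> sdual n DA = ?f ` {x \<in> ?V. ?f x \<in> sdual n DA}"
    by (subst (1) DA_eq_image) blast
  also have "{x \<in> ?V. ?f x \<in> sdual n DA} = carrier_vec t \<times> gram_ker \<times> gram_ker"
    by (auto simp: DA_word_in_sdual_DA_iff subsetD[OF gram_ker_carrier])
  finally show ?thesis .
qed

lemma subspace_DA: "subspace class_ring DA (module_vec TYPE('a) (2*n))"
  unfolding D_A_def by (rule subspace_rowsp[OF DA_gen_carrier])

lemma subspace_C: "subspace class_ring C (module_vec TYPE('a) n)"
  unfolding C_def by (rule subspace_rowsp) (use Br Bt in auto)

lemma card_gram_ker: "card gram_ker = CARD('a) ^ sdim r gram_ker"
  unfolding gram_ker_def by (rule card_subspace[OF subspace_mat_kernel[OF gram_carrier]])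

lemma sdim_DA: "sdim (2*n) DA = t + 2 * r"
proof (rule sdim_eqI[OF subspace_DA])
  show "card DA = CARD('a) ^ (t + 2 * r)"
    unfolding DA_eq_image card_image[OF inj_da_word]
    by (simp add: card_cartesian_product card_carrier_vec power_add mult_2)
qed

lemma sdim_hull: "sdim (2*n) (DA \<inter> sdual n DA) = t + 2 * sdim r gram_ker"
proof (rule sdim_eqI[OF subspace_Int[OF subspace_DA subspace_sdual]])
  have "inj_on (\<lambda>(a, b, c). DA_word a b c) (carrier_vec t \<times> gram_ker \<times> gram_ker)"
    by (rule inj_on_subset[OF inj_da_word]) (use gram_ker_carrier in auto)
  then show "card (DA \<inter> sdual n DA) = CARD('a) ^ (t + 2 * sdim r gram_ker)"
    unfolding hull_eq_image
    by (simp add: card_image card_cartesian_product card_carrier_vec card_gram_ker power_add mult_2)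
qed

lemma sdim_C: "sdim n C = r + t"
proof (rule sdim_eqI[OF subspace_C])
  show "card C = CARD('a) ^ (r + t)"
    unfolding C_eq_image card_image[OF inj_cword]
    by (simp add: card_cartesian_product card_carrier_vec power_add)
qed

lemma sdim_C_Int_edual_C: "sdim n (C \<inter> edual n C) = sdim r gram_ker + t"
proof (rule sdim_eqI[OF subspace_Int[OF subspace_C subspace_edual[OF C_carrier]]])
  have "inj_on (case_prod C_word) (gram_ker \<times> carrier_vec t)"
    by (rule inj_on_subset[OF inj_cword]) (use gram_ker_carrier in auto)
  then show "card (C \<inter> edual n C) = CARD('a) ^ (sdim r gram_ker + t)"
    unfolding C_Int_edual_C
    by (simp add: card_image card_cartesian_product card_carrier_vec card_gram_ker power_add)
qed

lemma c_EA_DA: "c_EA n DA = sdim n C - sdim n (C \<inter> edual n C)"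
  unfolding c_EA_def sdim_DA sdim_hull sdim_C sdim_C_Int_edual_C by simp

lemma k_EA_DA: "k_EA n DA = int n - 2 * int r - int t + int (sdim n C - sdim n (C \<inter> edual n C))"
  unfolding k_EA_def c_EA_DA sdim_DA sdim_C sdim_C_Int_edual_C by simp

lemma swt_sdual_DA_ge:
  assumes noev: "\<forall>e. \<not> eigenvalue A e"
    and u: "u \<in> sdual n DA" and u0: "u \<noteq> 0\<^sub>v (2*n)"
  shows "min (dH n (edual n C)) (nat \<lceil>(1 + 1 / real CARD('a)) * real (dH n (edual n (rowsp n Br)))\<rceil>)
    \<le> swt n u"
proof -
  define x y where "x = vec_first u n" and "y = vec_last u n"
  have x: "x \<in> carrier_vec n" and y: "y \<in> carrier_vec n" unfolding x_def y_def by simp_all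
  have "u \<in> carrier_vec (n + n)" using u unfolding sdual_def mult_2 by blast
  then have uxy: "u = x @\<^sub>v y" unfolding x_def y_def by simp
  have xy0: "x \<noteq> 0\<^sub>v n \<or> y \<noteq> 0\<^sub>v n"
    using u0 append_vec_eq_0_iff[OF x y] unfolding uxy mult_2 by blast
  from u have Brx: "Br *\<^sub>v x = 0\<^sub>v r" and Bry: "Br *\<^sub>v y = 0\<^sub>v r" and xy: "A *\<^sub>v (Bt *\<^sub>v x) = Bt *\<^sub>v y"
    unfolding uxy append_in_sdual_DA_iff[OF x y] using A Bt x by simp_all
  show ?thesis
  proof (cases "Bt *\<^sub>v x = 0\<^sub>v t")
    case True
    then have "Bt *\<^sub>v y = 0\<^sub>v t" using xy mult_mat_vec_zero[OF A] by simp
    then have xC: "x \<in> edual n C" and yC: "y \<in> edual n C"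
      using True Brx Bry x y by (simp_all add: edual_C mat_kernel[OF Br] mat_kernel[OF Bt])
    have "dH n (edual n C) \<le> hwt x \<or> dH n (edual n C) \<le> hwt y"
      using xy0 dH_le_hwt[OF xC] dH_le_hwt[OF yC] by blast
    then have "dH n (edual n C) \<le> swt n u"
      using hwt_le_swt_append[OF x y] unfolding uxy by linarith
    then show ?thesis by simp
  next
    case False
    let ?d = "dH n (edual n (rowsp n Br))"
    have ker: "v \<in> edual n (rowsp n Br)" if "v \<in> carrier_vec n" "Br *\<^sub>v v = 0\<^sub>v r" for v
      using that by (simp add: edual_rowsp[OF Br] mat_kernel[OF Br])
    have "x \<noteq> 0\<^sub>v n" using False mult_mat_vec_zero[OF Bt] by metis
    then have "?d \<le> hwt x" by (rule dH_le_hwt[OF ker[OF x Brx]])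
    moreover have "?d \<le> hwt (y + c \<cdot>\<^sub>v x)" for c
    proof (rule dH_le_hwt)
      have "Br *\<^sub>v (y + c \<cdot>\<^sub>v x) = Br *\<^sub>v y + c \<cdot>\<^sub>v (Br *\<^sub>v x)"
        using x y by (simp add: mult_add_distrib_mat_vec[OF Br] mult_mat_vec[OF Br])
      also have "\<dots> = 0\<^sub>v r" unfolding Brx Bry smult_vec_zero by simp
      finally show "y + c \<cdot>\<^sub>v x \<in> edual n (rowsp n Br)" using x y by (intro ker) simp_all
      show "y + c \<cdot>\<^sub>v x \<noteq> 0\<^sub>v n"
        by (rule pencil_ne_0_if_no_eigenvalue[OF A Bt x y _ False noev]) (use xy A Bt x in simp)
    qed
    ultimately have "(CARD('a) + 1) * ?d \<le> CARD('a) * swt n u"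
      unfolding uxy by (rule swt_pencil_bound[OF x y])
    then have "nat \<lceil>(1 + 1 / real CARD('a)) * real ?d\<rceil> \<le> swt n u"
      using card_field_gt_1[where 'a='a] by (intro nat_ceiling_le_if_mult_le) simp_all
    then show ?thesis by (rule min.coboundedI2)
  qed
qed

lemma d_EA_DA:
  assumes "\<forall>e. \<not> eigenvalue A e"
  shows "d_EA n DA \<ge> enat (min (dH n (edual n C))
                     (nat \<lceil>(1 + 1 / real CARD('a)) * real (dH n (edual n (rowsp n Br)))\<rceil>))"
proof -
  have zero: "0\<^sub>v (2*n) \<in> DA \<inter> sdual n DA"
    using subspace_vecD(2)[OF subspace_DA] subspace_vecD(2)[OF subspace_sdual] by blast
  show ?thesis unfolding d_EA_def
  proof (rule Inf_greatest)
    fix e assume "e \<in> (\<lambda>u. enat (swt n u)) ` (sdual n DA - DA \<inter> sdual n DA)"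
    then obtain u where u: "u \<in> sdual n DA - DA \<inter> sdual n DA" and e: "e = enat (swt n u)" by blast
    have "u \<noteq> 0\<^sub>v (2*n)" using u zero by blast
    then show "enat (min (dH n (edual n C))
        (nat \<lceil>(1 + 1 / real CARD('a)) * real (dH n (edual n (rowsp n Br)))\<rceil>)) \<le> e"
      using swt_sdual_DA_ge[OF assms] u unfolding e by simp
  qed
qed

end

theorem theorem2p3:
  fixes Br Bt A :: "'a::{finite,field} mat" and n r t :: nat and C :: "'a vec set"
  assumes n: "n \<ge> 1"
    and Br: "Br \<in> carrier_mat r n" and Bt: "Bt \<in> carrier_mat t n"
    and Br_li: "rows_lin_indep n Br" and Bt_li: "rows_lin_indep n Bt"
    and C_def: "C = rowsp n (Br @\<^sub>r Bt)"
    and direct: "rowsp n Br \<inter> rowsp n Bt = {0\<^sub>v n}"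
    and Bt_dual: "rowsp n Bt \<subseteq> edual n C"
    and t2: "t \<ge> 2"
    and A: "A \<in> carrier_mat t t" and A_inv: "invertible_mat A"
    and A_noev: "\<forall>e. \<not> eigenvalue A e"
  shows "c_EA n (D_A n A Br Bt) = sdim n C - sdim n (C \<inter> edual n C)
       \<and> k_EA n (D_A n A Br Bt) = int n - 2 * int r - int t + int (sdim n C - sdim n (C \<inter> edual n C))
       \<and> d_EA n (D_A n A Br Bt) \<ge>
           enat (min (dH n (edual n C))
                     (nat \<lceil>(1 + 1 / real (card (UNIV :: 'a set))) * real (dH n (edual n (rowsp n Br)))\<rceil>))"
proof -
  interpret DA_code Br Bt A n r t C
    by unfold_locales (fact Br Bt Br_li Bt_li C_def direct Bt_dual A)+
  show ?thesis using c_EA_DA k_EA_DA d_EA_DA[OF A_noev] by blast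
qed

end
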